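(* Let $p\geq 2$ and let $a,b$ be positive integers. (i) Suppose $\mathcal{S}$ is a $p$-qubit UPB and $i\in\{1,\dots,p\}$ is a qubit on which only one orthonormal basis $\{|u\rangle,|u^\perp\rangle\}$ of $\mathbb{C}^2$ is used, i.e. the $i$-th tensor factor of every element of $\mathcal{S}$ is a scalar multiple of $|u\rangle$ or of $|u^\perp\rangle$, with exactly $a$ elements of the first kind and $b$ of the second (so the orthogonality graph of qubit $i$ is the complete bipartite graph $K_{a,b}$). Then the set obtained from the $a$ elements of the first kind by deleting their $i$-th tensor factor is a $(p-1)$-qubit UPB of size $a$, and likewise the $b$ elements of the second kind give a $(p-1)$-qubit UPB of size $b$. (ii) Conversely, if there exist $(p-1)$-qubit UPBs of sizes $a$ and $b$, then there exists a $p$-qubit UPB of size $a+b$ in which only one orthonormal basis of $\mathbb{C}^2$ is used on some qubit, with $a$ states having one basis vector and $b$ states having the other on that qubit.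
   Context: A product state in $(\mathbb{C}^2)^{\otimes p}$ is a vector $|v_1\rangle\otimes\cdots\otimes|v_p\rangle$ with each $|v_j\rangle\in\mathbb{C}^2$. A $p$-qubit unextendible product basis (UPB) is a finite set $\mathcal{S}\subseteq(\mathbb{C}^2)^{\otimes p}$ of unit product vectors that are pairwise orthogonal, such that no nonzero product vector outside $\mathcal{S}$ is orthogonal to every element of $\mathcal{S}$. The orthogonality graph of qubit $\ell$ for a set of product states is the graph whose vertices are the states, with an edge between two states iff their $\ell$-th tensor factors are orthogonal. *)

theory Defs
  imports Complex_Main
begin

(* A qubit vector in C^2, coordinates indexed by False (=|0>) and True (=|1>). *)
type_synonym qubit = "bool \<Rightarrow> complex"

(* A vector of the p-qubit space (C^2)^{\<otimes> p}: coordinates indexed by bit strings of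
   length p (product vectors built by tensor vanish at all other indices). *)
type_synonym qvec = "bool list \<Rightarrow> complex"

definition qinner :: "qubit \<Rightarrow> qubit \<Rightarrow> complex" where
  "qinner u v = cnj (u False) * v False + cnj (u True) * v True"

definition inner_p :: "nat \<Rightarrow> qvec \<Rightarrow> qvec \<Rightarrow> complex" where
  "inner_p p x y = (\<Sum>bs\<in>{bs::bool list. length bs = p}. cnj (x bs) * y bs)"

definition tensor :: "qubit list \<Rightarrow> qvec" where
  "tensor vs = (\<lambda>bs. if length bs = length vs
                      then (\<Prod>j<length vs. (vs ! j) (bs ! j)) else 0)"

definition is_product :: "nat \<Rightarrow> qvec \<Rightarrow> bool" where
  "is_product p x \<longleftrightarrow> (\<exists>vs. length vs = p \<and> x = tensor vs)"

definition is_UPB :: "nat \<Rightarrow> qvec set \<Rightarrow> bool" where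
  "is_UPB p S \<longleftrightarrow>
     finite S \<and>
     (\<forall>x\<in>S. is_product p x \<and> inner_p p x x = 1) \<and>
     (\<forall>x\<in>S. \<forall>y\<in>S. x \<noteq> y \<longrightarrow> inner_p p x y = 0) \<and>
     \<not> (\<exists>y. is_product p y \<and> y \<noteq> (\<lambda>_. 0) \<and> y \<notin> S \<and> (\<forall>x\<in>S. inner_p p x y = 0))"

definition orthonormal_basis2 :: "qubit \<Rightarrow> qubit \<Rightarrow> bool" where
  "orthonormal_basis2 u w \<longleftrightarrow> qinner u u = 1 \<and> qinner w w = 1 \<and> qinner u w = 0"

(* elements of S whose i-th tensor factor (0-based) is a scalar multiple of u *)
definition factor_kind :: "nat \<Rightarrow> nat \<Rightarrow> qubit \<Rightarrow> qvec set \<Rightarrow> qvec set" where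
  "factor_kind p i u S =
     {x\<in>S. \<exists>vs c. length vs = p \<and> x = tensor vs \<and> vs ! i = (\<lambda>t. c * u t)}"

definition delete_factor :: "nat \<Rightarrow> nat \<Rightarrow> qubit \<Rightarrow> qvec set \<Rightarrow> qvec set" where
  "delete_factor p i u S =
     {tensor (take i vs @ drop (Suc i) vs) | vs.
        length vs = p \<and> vs ! i = u \<and> tensor vs \<in> S}"

end

theory Submission
  imports Defs
begin

text \<open>
  Inserting a fixed qubit u as the i-th tensor factor turns inner products of n-qubit vectors
  into inner products of (n+1)-qubit vectors, multiplied by \<open>\<langle>u|u'\<rangle>\<close>.
  (i) Deleting the factor u from the u-states therefore gives orthonormal product states, and a
  product vector y orthogonal to all of them lifts to \<open>u \<otimes> y\<close> (at position i), which is
  orthogonal to the u-states and, because \<open>\<langle>w|u\<rangle> = 0\<close>, to the w-states; unextendibility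
  of S forces y = 0.
  (ii) Conversely, let \<open>v \<otimes> y\<close> be orthogonal to \<open>u \<otimes> A \<union> w \<otimes> B\<close>. If
  \<open>\<langle>u|v\<rangle> \<noteq> 0\<close> then y is orthogonal to A, so y = 0; likewise for w and B; and if
  \<open>\<langle>u|v\<rangle> = \<langle>w|v\<rangle> = 0\<close> then v = 0 because u, w is a basis.
\<close>

definition del_nth :: "nat \<Rightarrow> 'a list \<Rightarrow> 'a list" where
  "del_nth i xs = take i xs @ drop (Suc i) xs"

definition ins_nth :: "nat \<Rightarrow> 'a \<Rightarrow> 'a list \<Rightarrow> 'a list" where
  "ins_nth i x xs = take i xs @ x # drop i xs"

lemma length_del_nth [simp]: "i < length xs \<Longrightarrow> length (del_nth i xs) = length xs - 1"
  by (simp add: del_nth_def)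

lemma length_ins_nth [simp]: "i \<le> length xs \<Longrightarrow> length (ins_nth i x xs) = Suc (length xs)"
  by (simp add: ins_nth_def)

lemma nth_ins_nth_same [simp]: "i \<le> length xs \<Longrightarrow> ins_nth i x xs ! i = x"
  by (simp add: ins_nth_def nth_append)

lemma del_nth_ins_nth [simp]: "i \<le> length xs \<Longrightarrow> del_nth i (ins_nth i x xs) = xs"
  by (simp add: del_nth_def ins_nth_def)

lemma ins_nth_del_nth: "i < length xs \<Longrightarrow> ins_nth i (xs ! i) (del_nth i xs) = xs"
  by (simp add: del_nth_def ins_nth_def id_take_nth_drop[symmetric])

lemma ins_nth_Cons_Suc [simp]: "ins_nth (Suc i) x (y # ys) = y # ins_nth i x ys"
  by (simp add: ins_nth_def)

lemma ins_nth_0 [simp]: "ins_nth 0 x xs = x # xs"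
  by (simp add: ins_nth_def)

lemma tensor_Cons_Cons: "tensor (v # vs) (b # bs) = v b * tensor vs bs"
  by (simp add: tensor_def prod.lessThan_Suc_shift del: prod.lessThan_Suc)

lemma tensor_eq_0_if_length_neq: "length bs \<noteq> length vs \<Longrightarrow> tensor vs bs = 0"
  by (simp add: tensor_def)

lemma tensor_ins_nth_ins_nth:
  "i \<le> length vs \<Longrightarrow> length cs = length vs \<Longrightarrow>
    tensor (ins_nth i v vs) (ins_nth i b cs) = v b * tensor vs cs"
proof (induction vs arbitrary: i cs)
  case Nil then show ?case by (simp add: tensor_Cons_Cons)
next
  case (Cons x xs)
  show ?case
  proof (cases i)
    case 0 then show ?thesis by (simp add: tensor_Cons_Cons)
  next
    case (Suc j)
    with Cons.prems obtain c cs' where "cs = c # cs'" "length cs' = length xs" "j \<le> length xs"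
      by (cases cs) auto
    with Suc Cons.IH show ?thesis by (simp add: tensor_Cons_Cons)
  qed
qed

lemma qinner_commute: "qinner w u = cnj (qinner u w)"
  by (simp add: qinner_def mult.commute)

lemma qinner_scale_left: "qinner (\<lambda>t. c * u t) v = cnj c * qinner u v"
  by (simp add: qinner_def algebra_simps)

lemma qinner_self_eq_1_imp_nonzero: "qinner u u = 1 \<Longrightarrow> u \<noteq> (\<lambda>_. 0)"
  by (auto simp: qinner_def)

lemma orthonormal_basis2_commute: "orthonormal_basis2 u w \<Longrightarrow> orthonormal_basis2 w u"
  by (auto simp: orthonormal_basis2_def qinner_commute[of w u])

lemma orthonormal_basis2_nonzero:
  "orthonormal_basis2 u w \<Longrightarrow> u \<noteq> (\<lambda>_. 0) \<and> w \<noteq> (\<lambda>_. 0)"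
  by (simp add: orthonormal_basis2_def qinner_self_eq_1_imp_nonzero)

lemma orthogonal_to_basis2_eq_0:
  assumes "orthonormal_basis2 u w" "qinner u v = 0" "qinner w v = 0"
  shows "v = (\<lambda>_. 0)"
proof -
  txt \<open>d is the determinant of the conjugated matrix with rows u and w; Lagrange's identity gives
    \<open>|d|\<^sup>2 = 1\<close>.\<close>
  define d where "d = cnj (u False) * cnj (w True) - cnj (u True) * cnj (w False)"
  have "cnj d * d = qinner u u * qinner w w - qinner u w * cnj (qinner u w)"
    unfolding d_def qinner_def by simp algebra
  then have "d \<noteq> 0" using assms(1) by (auto simp: orthonormal_basis2_def)
  moreover have "d * v False = 0" "d * v True = 0"
    using assms(2,3) unfolding d_def qinner_def by algebra+
  ultimately have "v False = 0" "v True = 0" by simp_all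
  then show ?thesis by (simp add: fun_eq_iff all_bool_eq)
qed

definition insert_factor :: "nat \<Rightarrow> nat \<Rightarrow> qubit \<Rightarrow> qvec \<Rightarrow> qvec" where
  "insert_factor n i u x =
     (\<lambda>bs. if length bs = Suc n then u (bs ! i) * x (del_nth i bs) else 0)"

lemma insert_factor_ins_nth [simp]:
  "i \<le> n \<Longrightarrow> length cs = n \<Longrightarrow> insert_factor n i u x (ins_nth i b cs) = u b * x cs"
  by (simp add: insert_factor_def)

lemma insert_factor_scale:
  "insert_factor n i (\<lambda>t. c * u t) x = insert_factor n i u (\<lambda>bs. c * x bs)"
  by (simp add: insert_factor_def fun_eq_iff)

lemma insert_factor_zero [simp]:
  "insert_factor n i (\<lambda>_. 0) x = (\<lambda>_. 0)" "insert_factor n i u (\<lambda>_. 0) = (\<lambda>_. 0)"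
  by (simp_all add: insert_factor_def fun_eq_iff)

lemma tensor_ins_nth:
  assumes "i \<le> length vs"
  shows "tensor (ins_nth i u vs) = insert_factor (length vs) i u (tensor vs)"
proof
  fix bs
  show "tensor (ins_nth i u vs) bs = insert_factor (length vs) i u (tensor vs) bs"
  proof (cases "length bs = Suc (length vs)")
    case True
    then have "i < length bs" using assms by simp
    then have "bs = ins_nth i (bs ! i) (del_nth i bs)" "length (del_nth i bs) = length vs"
      using True by (simp_all add: ins_nth_del_nth)
    then obtain b cs where "bs = ins_nth i b cs" "length cs = length vs" by blast
    then show ?thesis using assms by (simp add: tensor_ins_nth_ins_nth)
  next
    case False
    then show ?thesis using assms by (simp add: insert_factor_def tensor_eq_0_if_length_neq)
  qed
qed

lemma tensor_eq_insert_factor: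
  "i < length vs \<Longrightarrow> tensor vs = insert_factor (length vs - 1) i (vs ! i) (tensor (del_nth i vs))"
  using tensor_ins_nth[of i "del_nth i vs" "vs ! i"] by (simp add: ins_nth_del_nth)

lemma is_product_insert_factor:
  assumes "i \<le> n" "is_product n x"
  shows "is_product (Suc n) (insert_factor n i u x)"
proof -
  obtain vs where "length vs = n" "x = tensor vs"
    using assms(2) unfolding is_product_def by blast
  with assms(1) show ?thesis
    unfolding is_product_def by (intro exI[of _ "ins_nth i u vs"]) (simp add: tensor_ins_nth)
qed

lemma is_product_SucE:
  assumes "is_product (Suc n) z" "i \<le> n"
  obtains v y where "is_product n y" "z = insert_factor n i v y"
proof -
  obtain vs where vs: "length vs = Suc n" "z = tensor vs"
    using assms(1) unfolding is_product_def by blast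
  with assms(2) have "z = insert_factor n i (vs ! i) (tensor (del_nth i vs))"
    using tensor_eq_insert_factor[of i vs] by simp
  moreover have "is_product n (tensor (del_nth i vs))"
    unfolding is_product_def using vs assms(2) by (intro exI[of _ "del_nth i vs"]) simp
  ultimately show ?thesis using that by blast
qed

lemma is_product_scale:
  assumes "0 < n" "is_product n x"
  shows "is_product n (\<lambda>bs. c * x bs)"
proof -
  obtain vs where vs: "length vs = n" "x = tensor vs"
    using assms(2) unfolding is_product_def by blast
  then obtain v vs' where "vs = v # vs'" using assms(1) by (cases vs) auto
  moreover have "(\<lambda>bs. c * tensor (v # vs') bs) = tensor ((\<lambda>t. c * v t) # vs')"
  proof
    fix bs show "c * tensor (v # vs') bs = tensor ((\<lambda>t. c * v t) # vs') bs"
      by (cases bs) (simp_all add: tensor_Cons_Cons tensor_eq_0_if_length_neq)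
  qed
  ultimately show ?thesis
    using vs unfolding is_product_def by (intro exI[of _ "(\<lambda>t. c * v t) # vs'"]) simp
qed

lemma is_product_vanishes: "is_product n x \<Longrightarrow> length bs \<noteq> n \<Longrightarrow> x bs = 0"
  unfolding is_product_def by (auto simp: tensor_eq_0_if_length_neq)

lemma bij_betw_ins_nth:
  assumes "i \<le> n"
  shows "bij_betw (\<lambda>(b, cs). ins_nth i b cs) (UNIV \<times> {cs. length cs = n}) {bs. length bs = Suc n}"
proof (rule bij_betw_byWitness[where f' = "\<lambda>bs. (bs ! i, del_nth i bs)"])
  show "\<forall>bs\<in>{bs. length bs = Suc n}. (\<lambda>(b, cs). ins_nth i b cs) (bs ! i, del_nth i bs) = bs"
    using assms by (simp add: ins_nth_del_nth)
qed (use assms in auto)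

lemma sum_lists_Suc_ins_nth:
  assumes "i \<le> n"
  shows "(\<Sum>bs | length bs = Suc n. f bs) = (\<Sum>b\<in>UNIV. \<Sum>cs | length cs = n. f (ins_nth i b cs))"
proof -
  have "finite {cs :: bool list. length cs = n}"
    using finite_lists_length_eq[of "UNIV :: bool set"] by simp
  then show ?thesis
    using sum.reindex_bij_betw[OF bij_betw_ins_nth[OF assms], of f]
    by (simp add: sum.cartesian_product split_def)
qed

lemma inner_insert_factor:
  assumes "i \<le> n"
  shows "inner_p (Suc n) (insert_factor n i u x) (insert_factor n i v y) = qinner u v * inner_p n x y"
  unfolding inner_p_def sum_lists_Suc_ins_nth[OF assms]
  using assms
  by (simp add: qinner_def UNIV_bool sum_distrib_left sum.distrib algebra_simps)

lemma insert_factor_eq_iff: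
  assumes "u \<noteq> (\<lambda>_. 0)" "i \<le> n"
  shows "insert_factor n i u x = insert_factor n i u y \<longleftrightarrow> (\<forall>cs. length cs = n \<longrightarrow> x cs = y cs)"
proof
  assume eq: "insert_factor n i u x = insert_factor n i u y"
  obtain b where b: "u b \<noteq> 0" using assms(1) by auto
  show "\<forall>cs. length cs = n \<longrightarrow> x cs = y cs"
  proof (intro allI impI)
    fix cs :: "bool list" assume "length cs = n"
    then have "u b * x cs = u b * y cs"
      using fun_cong[OF eq, of "ins_nth i b cs"] assms(2) by simp
    with b show "x cs = y cs" by simp
  qed
qed (use assms(2) in \<open>auto simp: insert_factor_def fun_eq_iff\<close>)

lemma inj_on_insert_factor:
  assumes "u \<noteq> (\<lambda>_. 0)" "i \<le> n"
  shows "inj_on (insert_factor n i u) {x. is_product n x}"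
proof (rule inj_onI)
  fix x y assume "x \<in> {x. is_product n x}" "y \<in> {x. is_product n x}"
    and "insert_factor n i u x = insert_factor n i u y"
  then have "\<forall>cs. length cs = n \<longrightarrow> x cs = y cs" and "is_product n x" "is_product n y"
    using insert_factor_eq_iff[OF assms] by auto
  then show "x = y"
    by (intro ext) (metis is_product_vanishes)
qed

lemma insert_factor_eq_0_iff:
  assumes "u \<noteq> (\<lambda>_. 0)" "i \<le> n" "is_product n x"
  shows "insert_factor n i u x = (\<lambda>_. 0) \<longleftrightarrow> x = (\<lambda>_. 0)"
  using insert_factor_eq_iff[OF assms(1,2), of x "\<lambda>_. 0"] is_product_vanishes[OF assms(3)]
  by (auto simp: fun_eq_iff)

text \<open>A product vector orthogonal to all of S cannot lie in S, where it would have norm 0, so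
  the clause \<open>y \<notin> S\<close> in \<open>is_UPB\<close> may be dropped.\<close>

lemma is_UPB_iff:
  "is_UPB p S \<longleftrightarrow>
     finite S \<and>
     (\<forall>x\<in>S. is_product p x \<and> inner_p p x x = 1) \<and>
     (\<forall>x\<in>S. \<forall>y\<in>S. x \<noteq> y \<longrightarrow> inner_p p x y = 0) \<and>
     (\<forall>y. is_product p y \<and> (\<forall>x\<in>S. inner_p p x y = 0) \<longrightarrow> y = (\<lambda>_. 0))"
  unfolding is_UPB_def by fastforce

lemma factor_kindE:
  assumes "x \<in> factor_kind (Suc n) i u S" "i \<le> n"
  obtains c y where "is_product n y" "x = insert_factor n i (\<lambda>t. c * u t) y"
proof -
  obtain vs c where vs: "length vs = Suc n" "x = tensor vs" "vs ! i = (\<lambda>t. c * u t)"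
    using assms(1) by (auto simp: factor_kind_def)
  with assms(2) have "x = insert_factor n i (\<lambda>t. c * u t) (tensor (del_nth i vs))"
    using tensor_eq_insert_factor[of i vs] by simp
  moreover have "is_product n (tensor (del_nth i vs))"
    unfolding is_product_def using vs assms(2) by (intro exI[of _ "del_nth i vs"]) simp
  ultimately show ?thesis using that by blast
qed

lemma insert_factor_in_factor_kind:
  assumes "i \<le> n" "is_product n y" "insert_factor n i u y \<in> S"
  shows "insert_factor n i u y \<in> factor_kind (Suc n) i u S"
proof -
  obtain vs where "length vs = n" "y = tensor vs"
    using assms(2) unfolding is_product_def by blast
  with assms show ?thesis
    unfolding factor_kind_def
    by (auto intro!: exI[of _ "ins_nth i u vs"] exI[of _ 1] simp: tensor_ins_nth)
qed

lemma inner_factor_kind_insert_factor: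
  assumes "qinner w u = 0" "i \<le> n" "x \<in> factor_kind (Suc n) i w S"
  shows "inner_p (Suc n) x (insert_factor n i u y) = 0"
proof -
  obtain c z where "x = insert_factor n i (\<lambda>t. c * w t) z"
    using factor_kindE[OF assms(3,2)] .
  then show ?thesis
    using assms(1,2) by (simp add: inner_insert_factor qinner_scale_left)
qed

lemma delete_factor_eq:
  assumes "i \<le> n"
  shows "delete_factor (Suc n) i u S = {y. is_product n y \<and> insert_factor n i u y \<in> S}"
proof safe
  fix y assume "y \<in> delete_factor (Suc n) i u S"
  then obtain vs where vs: "y = tensor (del_nth i vs)" "length vs = Suc n" "vs ! i = u" "tensor vs \<in> S"
    by (auto simp: delete_factor_def del_nth_def)
  then show "is_product n y"
    unfolding is_product_def using assms by (intro exI[of _ "del_nth i vs"]) simp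
  show "insert_factor n i u y \<in> S"
    using vs assms tensor_eq_insert_factor[of i vs] by simp
next
  fix y assume "is_product n y" "insert_factor n i u y \<in> S"
  then obtain rs where "length rs = n" "y = tensor rs" "tensor (ins_nth i u rs) \<in> S"
    using assms unfolding is_product_def by (auto simp: tensor_ins_nth)
  with assms show "y \<in> delete_factor (Suc n) i u S"
    unfolding delete_factor_def
    by (intro CollectI exI[of _ "ins_nth i u rs"]) (simp add: del_nth_def[symmetric])
qed

text \<open>The scalar in the i-th factor is absorbed into the remaining factors, which needs \<open>0 < n\<close>.\<close>

lemma factor_kind_eq_image_delete_factor:
  assumes "0 < n" "i \<le> n"
  shows "factor_kind (Suc n) i u S = insert_factor n i u ` delete_factor (Suc n) i u S"
proof
  show "factor_kind (Suc n) i u S \<subseteq> insert_factor n i u ` delete_factor (Suc n) i u S"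
  proof
    fix x assume x: "x \<in> factor_kind (Suc n) i u S"
    then obtain c y where "is_product n y" "x = insert_factor n i u (\<lambda>bs. c * y bs)"
      using factor_kindE[OF x assms(2)] insert_factor_scale by metis
    moreover have "x \<in> S" using x by (simp add: factor_kind_def)
    ultimately show "x \<in> insert_factor n i u ` delete_factor (Suc n) i u S"
      using is_product_scale[OF assms(1)] by (auto simp: delete_factor_eq[OF assms(2)])
  qed
qed (auto simp: delete_factor_eq[OF assms(2)] intro: insert_factor_in_factor_kind[OF assms(2)])

lemma card_delete_factor:
  assumes "0 < n" "i \<le> n" "u \<noteq> (\<lambda>_. 0)"
  shows "card (delete_factor (Suc n) i u S) = card (factor_kind (Suc n) i u S)"
proof -
  have "inj_on (insert_factor n i u) (delete_factor (Suc n) i u S)"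
    by (rule inj_on_subset[OF inj_on_insert_factor[OF assms(3,2)]])
      (auto simp: delete_factor_eq[OF assms(2)])
  then show ?thesis
    by (simp add: factor_kind_eq_image_delete_factor[OF assms(1,2)] card_image)
qed

lemma is_UPB_delete_factor:
  assumes S: "is_UPB (Suc n) S" and "0 < n" "i \<le> n" and uw: "orthonormal_basis2 u w"
    and kinds: "S = factor_kind (Suc n) i u S \<union> factor_kind (Suc n) i w S"
  shows "is_UPB n (delete_factor (Suc n) i u S)"
proof -
  let ?D = "delete_factor (Suc n) i u S" and ?ins = "insert_factor n i u"
  have uu: "qinner u u = 1" and wu: "qinner w u = 0"
    using uw orthonormal_basis2_commute[OF uw] by (simp_all add: orthonormal_basis2_def)
  have D: "?D = {y. is_product n y \<and> ?ins y \<in> S}"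
    by (rule delete_factor_eq[OF \<open>i \<le> n\<close>])
  have inner_ins: "inner_p (Suc n) (?ins y) (?ins z) = inner_p n y z" for y z
    using inner_insert_factor[OF \<open>i \<le> n\<close>] uu by simp
  have inj: "inj_on ?ins ?D"
    using inj_on_insert_factor[OF qinner_self_eq_1_imp_nonzero[OF uu] \<open>i \<le> n\<close>] D
    by (auto intro: inj_on_subset)
  have "finite ?D"
  proof (rule finite_imageD[OF _ inj])
    show "finite (?ins ` ?D)" using S D by (auto simp: is_UPB_def intro: finite_subset)
  qed
  moreover have "\<forall>y\<in>?D. is_product n y \<and> inner_p n y y = 1"
    using S D inner_ins by (auto simp: is_UPB_def)
  moreover have "inner_p n y z = 0" if "y \<in> ?D" "z \<in> ?D" "y \<noteq> z" for y z
  proof -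
    have "?ins y \<noteq> ?ins z" using inj that by (auto dest: inj_onD)
    then show ?thesis using S D that inner_ins[of y z] by (auto simp: is_UPB_def)
  qed
  moreover have "y = (\<lambda>_. 0)" if y: "is_product n y" and orth: "\<forall>x\<in>?D. inner_p n x y = 0" for y
  proof -
    have "inner_p (Suc n) x (?ins y) = 0" if "x \<in> factor_kind (Suc n) i u S" for x
    proof -
      have "x \<in> ?ins ` ?D"
        using that factor_kind_eq_image_delete_factor[OF \<open>0 < n\<close> \<open>i \<le> n\<close>] by simp
      then obtain d where "d \<in> ?D" "x = ?ins d" by blast
      then show ?thesis using orth inner_ins by simp
    qed
    moreover have "inner_p (Suc n) x (?ins y) = 0" if "x \<in> factor_kind (Suc n) i w S" for x
      using that by (rule inner_factor_kind_insert_factor[OF wu \<open>i \<le> n\<close>])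
    ultimately have "\<forall>x\<in>S. inner_p (Suc n) x (?ins y) = 0"
      using kinds by blast
    then have "?ins y = (\<lambda>_. 0)"
      using S is_product_insert_factor[OF \<open>i \<le> n\<close> y] by (simp add: is_UPB_iff)
    then show ?thesis
      using insert_factor_eq_0_iff[OF qinner_self_eq_1_imp_nonzero[OF uu] \<open>i \<le> n\<close> y] by simp
  qed
  ultimately show ?thesis by (auto simp: is_UPB_iff)
qed

lemma insert_factor_images_disjoint:
  assumes "is_UPB n B" "i \<le> n" "qinner u w = 0" "qinner w w = 1"
  shows "insert_factor n i u ` A \<inter> insert_factor n i w ` B = {}"
proof -
  have "insert_factor n i u a \<noteq> insert_factor n i w b" if "b \<in> B" for a b
  proof
    assume eq: "insert_factor n i u a = insert_factor n i w b"
    have "inner_p (Suc n) (insert_factor n i u a) (insert_factor n i w b) = 0"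
      using assms(2,3) by (simp add: inner_insert_factor)
    moreover have "inner_p (Suc n) (insert_factor n i w b) (insert_factor n i w b) = 1"
      using assms that by (simp add: inner_insert_factor is_UPB_def)
    ultimately show False using eq by simp
  qed
  then show ?thesis by blast
qed

lemma factor_kind_insert_factor_Un:
  assumes A: "is_UPB n A" and B: "is_UPB n B" and "i \<le> n" and uw: "orthonormal_basis2 u w"
  shows "factor_kind (Suc n) i u (insert_factor n i u ` A \<union> insert_factor n i w ` B)
    = insert_factor n i u ` A"
    (is "factor_kind _ _ _ ?S = _")
proof
  show "insert_factor n i u ` A \<subseteq> factor_kind (Suc n) i u ?S"
    using A \<open>i \<le> n\<close> by (auto simp: is_UPB_def intro!: insert_factor_in_factor_kind)
  show "factor_kind (Suc n) i u ?S \<subseteq> insert_factor n i u ` A"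
  proof
    fix x assume x: "x \<in> factor_kind (Suc n) i u ?S"
    have "x \<notin> insert_factor n i w ` B"
    proof
      assume "x \<in> insert_factor n i w ` B"
      then obtain b where b: "b \<in> B" "x = insert_factor n i w b" by blast
      have "inner_p (Suc n) x x = 0"
        using inner_factor_kind_insert_factor[OF _ \<open>i \<le> n\<close> x] uw b(2)
        by (simp add: orthonormal_basis2_def)
      moreover have "inner_p (Suc n) x x = 1"
        using B b uw \<open>i \<le> n\<close> by (simp add: inner_insert_factor is_UPB_def orthonormal_basis2_def)
      ultimately show False by simp
    qed
    moreover have "x \<in> ?S" using x by (simp add: factor_kind_def)
    ultimately show "x \<in> insert_factor n i u ` A" by blast
  qed
qed

lemma is_UPB_insert_factor_Un:
  assumes A: "is_UPB n A" and B: "is_UPB n B" and "i \<le> n" and uw: "orthonormal_basis2 u w"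
  shows "is_UPB (Suc n) (insert_factor n i u ` A \<union> insert_factor n i w ` B)"
    (is "is_UPB _ ?S")
proof -
  have uu: "qinner u u = 1" and ww: "qinner w w = 1"
    and uw0: "qinner u w = 0" and wu0: "qinner w u = 0"
    using uw orthonormal_basis2_commute[OF uw] by (simp_all add: orthonormal_basis2_def)
  have inner_ins: "inner_p (Suc n) (insert_factor n i v y) (insert_factor n i v' z)
      = qinner v v' * inner_p n y z" for v v' y z
    by (rule inner_insert_factor[OF \<open>i \<le> n\<close>])
  have "finite ?S" using A B by (simp add: is_UPB_def)
  moreover have "is_product (Suc n) x \<and> inner_p (Suc n) x x = 1" if "x \<in> ?S" for x
    using that A B uu ww is_product_insert_factor[OF \<open>i \<le> n\<close>]
    by (auto simp: inner_ins is_UPB_def)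
  moreover have "inner_p (Suc n) x y = 0" if "x \<in> ?S" "y \<in> ?S" "x \<noteq> y" for x y
  proof -
    have same_side: "inner_p n a b = 0"
      if "is_UPB n C" "a \<in> C" "b \<in> C" "insert_factor n i e a \<noteq> insert_factor n i e b" for C a b e
      using that by (auto simp: is_UPB_def)
    show ?thesis
      using \<open>x \<in> ?S\<close> \<open>y \<in> ?S\<close> \<open>x \<noteq> y\<close> same_side[OF A] same_side[OF B] uw0 wu0
      by (auto simp: inner_ins)
  qed
  moreover have "z = (\<lambda>_. 0)"
    if z: "is_product (Suc n) z" and orth: "\<forall>x\<in>?S. inner_p (Suc n) x z = 0" for z
  proof -
    obtain v y where y: "is_product n y" and z_eq: "z = insert_factor n i v y"
      using is_product_SucE[OF z \<open>i \<le> n\<close>] .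
    have side: "y = (\<lambda>_. 0)"
      if C: "is_UPB n C" and "insert_factor n i e ` C \<subseteq> ?S" and "qinner e v \<noteq> 0" for e C
    proof -
      have "qinner e v * inner_p n c y = 0" if "c \<in> C" for c
      proof -
        have "inner_p (Suc n) (insert_factor n i e c) z = 0"
          using orth that \<open>insert_factor n i e ` C \<subseteq> ?S\<close> by blast
        then show ?thesis using z_eq inner_ins by simp
      qed
      then show "y = (\<lambda>_. 0)" using C y \<open>qinner e v \<noteq> 0\<close> by (simp add: is_UPB_iff)
    qed
    have "qinner u v = 0 \<or> y = (\<lambda>_. 0)" and "qinner w v = 0 \<or> y = (\<lambda>_. 0)"
      using side[OF A] side[OF B] by auto
    then have "v = (\<lambda>_. 0) \<or> y = (\<lambda>_. 0)"
      using orthogonal_to_basis2_eq_0[OF uw] by blast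
    then show ?thesis using z_eq by auto
  qed
  ultimately show ?thesis by (auto simp: is_UPB_iff)
qed

lemma orthonormal_basis2_standard:
  "orthonormal_basis2 (\<lambda>b. if b then 0 else 1) (\<lambda>b. if b then 1 else 0)"
  by (simp add: orthonormal_basis2_def qinner_def)

lemma card_insert_factor_image:
  assumes "is_UPB n A" "i \<le> n" "u \<noteq> (\<lambda>_. 0)"
  shows "card (insert_factor n i u ` A) = card A"
  using assms inj_on_subset[OF inj_on_insert_factor[OF assms(3,2)]]
  by (auto simp: is_UPB_def intro!: card_image)

lemma card_insert_factor_Un:
  assumes A: "is_UPB n A" and B: "is_UPB n B" and "i \<le> n" and uw: "orthonormal_basis2 u w"
  shows "card (insert_factor n i u ` A \<union> insert_factor n i w ` B) = card A + card B"
proof -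
  have "u \<noteq> (\<lambda>_. 0)" "w \<noteq> (\<lambda>_. 0)" "qinner u w = 0" "qinner w w = 1"
    using uw orthonormal_basis2_nonzero[OF uw] by (auto simp: orthonormal_basis2_def)
  with A B \<open>i \<le> n\<close> show ?thesis
    by (simp add: card_Un_disjoint insert_factor_images_disjoint card_insert_factor_image is_UPB_def)
qed

lemma exists_UPB_with_split_qubit:
  assumes A: "is_UPB n A" and B: "is_UPB n B"
  shows "\<exists>S u w. is_UPB (Suc n) S \<and> card S = card A + card B \<and> orthonormal_basis2 u w \<and>
    S = factor_kind (Suc n) 0 u S \<union> factor_kind (Suc n) 0 w S \<and>
    card (factor_kind (Suc n) 0 u S) = card A \<and> card (factor_kind (Suc n) 0 w S) = card B"
proof -
  obtain u w :: qubit where uw: "orthonormal_basis2 u w"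
    using orthonormal_basis2_standard by blast
  define S where "S = insert_factor n 0 u ` A \<union> insert_factor n 0 w ` B"
  have "factor_kind (Suc n) 0 u S = insert_factor n 0 u ` A"
    "factor_kind (Suc n) 0 w S = insert_factor n 0 w ` B"
    using factor_kind_insert_factor_Un[OF A B _ uw]
      factor_kind_insert_factor_Un[OF B A _ orthonormal_basis2_commute[OF uw]]
    unfolding S_def by (simp_all add: Un_commute)
  with A B uw orthonormal_basis2_nonzero[OF uw] show ?thesis
    by (intro exI[of _ S] exI[of _ u] exI[of _ w])
      (simp add: S_def is_UPB_insert_factor_Un card_insert_factor_Un card_insert_factor_image)
qed

theorem lemmaA1:
  fixes p a b :: nat
  assumes "p \<ge> 2" and "a > 0" and "b > 0"
  shows
   "(\<forall>S i u w. is_UPB p S \<and> i < p \<and> orthonormal_basis2 u w \<and>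
        S = factor_kind p i u S \<union> factor_kind p i w S \<and>
        card (factor_kind p i u S) = a \<and> card (factor_kind p i w S) = b
      \<longrightarrow> is_UPB (p - 1) (delete_factor p i u S) \<and> card (delete_factor p i u S) = a \<and>
          is_UPB (p - 1) (delete_factor p i w S) \<and> card (delete_factor p i w S) = b)
    \<and>
    ((\<exists>A B. is_UPB (p - 1) A \<and> card A = a \<and> is_UPB (p - 1) B \<and> card B = b)
      \<longrightarrow> (\<exists>S i u w. is_UPB p S \<and> card S = a + b \<and> i < p \<and> orthonormal_basis2 u w \<and>
            S = factor_kind p i u S \<union> factor_kind p i w S \<and>
            card (factor_kind p i u S) = a \<and> card (factor_kind p i w S) = b))"
proof -
  obtain n where p: "p = Suc n" and "0 < n"
    using assms(1) by (intro that[of "p - 1"]) auto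
  show ?thesis
  proof safe
    fix S i u w
    assume "is_UPB p S" "i < p" and uw: "orthonormal_basis2 u w"
      and "S = factor_kind p i u S \<union> factor_kind p i w S"
    with \<open>0 < n\<close> orthonormal_basis2_commute[OF uw] orthonormal_basis2_nonzero[OF uw]
    show "is_UPB (p - 1) (delete_factor p i u S)"
      "card (delete_factor p i u S) = card (factor_kind p i u S)"
      "is_UPB (p - 1) (delete_factor p i w S)"
      "card (delete_factor p i w S) = card (factor_kind p i w S)"
      unfolding p by (simp_all add: is_UPB_delete_factor card_delete_factor Un_commute)
  next
    fix A B
    assume "is_UPB (p - 1) A" "is_UPB (p - 1) B"
    then show "\<exists>S i u w. is_UPB p S \<and> card S = card A + card B \<and> i < p \<and>
        orthonormal_basis2 u w \<and> S = factor_kind p i u S \<union> factor_kind p i w S \<and>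
        card (factor_kind p i u S) = card A \<and> card (factor_kind p i w S) = card B"
      using exists_UPB_with_split_qubit[of n A B] unfolding p by auto
  qed
qed

end
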